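(* Let $\phi$ be an instance of \textsc{Max (2,3)-SAT} with $n$ variables and let $T_\phi$ be the tournament instance constructed from $\phi$ as described in the context. If $T_\phi$ has a seeding whose tournament value is at least $k+n$, then $\phi$ admits an assignment that satisfies at least $k$ clauses.
   Context: Tournament model: players form a finite set of size $2^{n'}$ totally ordered by strength (stronger beats weaker). A seeding is a bijection $\sigma$ from players to $[2^{n'}]$. In round $r=1,\dots,n'$, for each block of seed positions $\{(k-1)2^r+1,\dots,k2^r\}$, the winner $a$ of its first half $\{(k-1)2^r+1,\dots,(k-1)2^r+2^{r-1}\}$ plays the winner $b$ of its second half (a single-position block is won by the player seeded there), the stronger one wins the block, and the game has value $v(a,b)$ (values do not depend on the round). The tournament value is the sum of values of all games played. \textsc{Max (2,3)-SAT} instance: a CNF formula $\phi$ with variables $x_1,\dots,x_n$ and clauses $c_1,\dots,c_m$, each clause having exactly two literals and each variable appearing in at most three clauses. Construction of $T_\phi$: let $n'$ be the smallest integer with $16n\le 2^{n'}$ and $p=2^{n'}-16n$. Players: for each $i\in[n]$, variable players $x_i,x_i^T,x_i^F$ and special players $\widehat d_i,d_i,\widetilde d_i$; for each clause $c$, a clause player $c$; dummy players $f_1,\dots,f_{10n+p-m}$. Strength order (strongest first): $\widehat d_1>d_1>\widetilde d_1>\widehat d_2>d_2>\widetilde d_2>\dots>\widehat d_n>d_n>\widetilde d_n>x_1>x_1^T>x_1^F>\dots>x_n>x_n^T>x_n^F>c_1>\dots>c_m>f_1>\dots>f_{10n+p-m}$. Round-oblivious symmetric game values ($v(a,b)=v(b,a)$):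 for each $i$, $v(x_i,x_i^T)=v(x_i,x_i^F)=1$; for each clause $c$ containing a literal of variable $x$, $v(c,x^T)=1$ if $x$ appears non-negated in $c$ and $v(c,x^F)=1$ if it appears negated; for each $i$, $v(d_i,\widehat d_i)=v(d_i,\widetilde d_i)=v(d_i,x_i)=0$; for each $i$ and every player $Y$ for which the pair value has not been set above, $v(d_i,Y)=v(x_i,Y)=-5$; all remaining pairs have value $0$. Thus the values lie in $\{0,1,-5\}$. *)

theory Defs
  imports Main "HOL-Library.Product_Lexorder"
begin

text \<open>A literal is a pair (i, b): variable x_i, non-negated iff b = True.
  A formula with n variables x_1..x_n is a list of clauses c_1..c_m, each clause
  a pair of two (distinct) literals.\<close>

type_synonym literal = "nat \<times> bool"
type_synonym clause = "literal \<times> literal"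

definition clause_lits :: "clause \<Rightarrow> literal set" where
  "clause_lits c = {fst c, snd c}"

definition occurs_in :: "nat \<Rightarrow> clause \<Rightarrow> bool" where
  "occurs_in i c \<longleftrightarrow> (\<exists>b. (i, b) \<in> clause_lits c)"

definition max23sat :: "nat \<Rightarrow> clause list \<Rightarrow> bool" where
  "max23sat n cls \<longleftrightarrow>
     (\<forall>c\<in>set cls. fst c \<noteq> snd c \<and> (\<forall>(i, b)\<in>clause_lits c. 1 \<le> i \<and> i \<le> n)) \<and>
     (\<forall>i\<in>{1..n}. card {j\<in>{1..length cls}. occurs_in i (cls ! (j - 1))} \<le> 3)"

definition lit_sat :: "(nat \<Rightarrow> bool) \<Rightarrow> literal \<Rightarrow> bool" where
  "lit_sat a l \<longleftrightarrow> a (fst l) = snd l"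

definition num_sat :: "clause list \<Rightarrow> (nat \<Rightarrow> bool) \<Rightarrow> nat" where
  "num_sat cls a = card {j\<in>{1..length cls}. \<exists>l\<in>clause_lits (cls ! (j - 1)). lit_sat a l}"

datatype player =
    Dhat nat | D nat | Dtil nat
  | X nat | XT nat | XF nat
  | C nat | F nat

definition nprime :: "nat \<Rightarrow> nat" where
  "nprime n = (LEAST N. 16 * n \<le> 2 ^ N)"

definition pad :: "nat \<Rightarrow> nat" where
  "pad n = 2 ^ nprime n - 16 * n"

definition players :: "nat \<Rightarrow> clause list \<Rightarrow> player set" where
  "players n cls =
     Dhat ` {1..n} \<union> D ` {1..n} \<union> Dtil ` {1..n} \<union>
     X ` {1..n} \<union> XT ` {1..n} \<union> XF ` {1..n} \<union>
     C ` {1..length cls} \<union> F ` {1..10 * n + pad n - length cls}"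

text \<open>Strength key: lexicographically smaller key = stronger player. This realises
  Dhat_1 > D_1 > Dtil_1 > ... > Dtil_n > x_1 > x_1^T > x_1^F > ... > x_n^F > c_1 > ... > c_m > f_1 > ...\<close>
fun skey :: "player \<Rightarrow> nat \<times> nat \<times> nat" where
  "skey (Dhat i) = (0, i, 0)"
| "skey (D i) = (0, i, 1)"
| "skey (Dtil i) = (0, i, 2)"
| "skey (X i) = (1, i, 0)"
| "skey (XT i) = (1, i, 1)"
| "skey (XF i) = (1, i, 2)"
| "skey (C j) = (2, j, 0)"
| "skey (F j) = (3, j, 0)"

definition stronger :: "player \<Rightarrow> player \<Rightarrow> player" where
  "stronger a b = (if skey a \<le> skey b then a else b)"

definition val_one :: "nat \<Rightarrow> clause list \<Rightarrow> player \<Rightarrow> player \<Rightarrow> bool" where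
  "val_one n cls a b \<longleftrightarrow>
     (\<exists>i\<in>{1..n}. (a = X i \<and> (b = XT i \<or> b = XF i))) \<or>
     (\<exists>j\<in>{1..length cls}. \<exists>i. a = C j \<and>
        ((b = XT i \<and> (i, True) \<in> clause_lits (cls ! (j - 1))) \<or>
         (b = XF i \<and> (i, False) \<in> clause_lits (cls ! (j - 1)))))"

definition val_zero :: "nat \<Rightarrow> player \<Rightarrow> player \<Rightarrow> bool" where
  "val_zero n a b \<longleftrightarrow>
     (\<exists>i\<in>{1..n}. a = D i \<and> (b = Dhat i \<or> b = Dtil i \<or> b = X i))"

definition is_dx :: "nat \<Rightarrow> player \<Rightarrow> bool" where
  "is_dx n a \<longleftrightarrow> (\<exists>i\<in>{1..n}. a = D i \<or> a = X i)"

definition gval :: "nat \<Rightarrow> clause list \<Rightarrow> player \<Rightarrow> player \<Rightarrow> int" where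
  "gval n cls a b =
     (if val_one n cls a b \<or> val_one n cls b a then 1
      else if val_zero n a b \<or> val_zero n b a then 0
      else if is_dx n a \<or> is_dx n b then -5
      else 0)"

text \<open>winner sigma r k: winner of the k-th block (k \<ge> 1) of 2^r seed positions
  {(k-1)2^r+1..k2^r}. Round 0 blocks are single positions.\<close>
fun winner :: "player set \<Rightarrow> (player \<Rightarrow> nat) \<Rightarrow> nat \<Rightarrow> nat \<Rightarrow> player" where
  "winner P \<sigma> 0 k = inv_into P \<sigma> k"
| "winner P \<sigma> (Suc r) k = stronger (winner P \<sigma> r (2 * k - 1)) (winner P \<sigma> r (2 * k))"

definition tournament_value ::
  "player set \<Rightarrow> (player \<Rightarrow> player \<Rightarrow> int) \<Rightarrow> nat \<Rightarrow> (player \<Rightarrow> nat) \<Rightarrow> int" where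
  "tournament_value P v N \<sigma> =
     (\<Sum>r\<in>{1..N}. \<Sum>k\<in>{1..2 ^ (N - r)}.
        v (winner P \<sigma> (r - 1) (2 * k - 1)) (winner P \<sigma> (r - 1) (2 * k)))"

definition seeding :: "player set \<Rightarrow> nat \<Rightarrow> (player \<Rightarrow> nat) \<Rightarrow> bool" where
  "seeding P N \<sigma> \<longleftrightarrow> bij_betw \<sigma> P {1..2 ^ N}"

definition Tphi_value :: "nat \<Rightarrow> clause list \<Rightarrow> (player \<Rightarrow> nat) \<Rightarrow> int" where
  "Tphi_value n cls \<sigma> = tournament_value (players n cls) (gval n cls) (nprime n) \<sigma>"

end

theory Submission
  imports Defs
begin

text \<open>In a knockout tournament every player except the champion loses exactly one game, so the
  tournament value is the sum, over all eliminated players q, of the value of the game q lost;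
  moreover a player that wins r rounds has beaten exactly r players. Games of value 1 are won by
  some x_i (against x_i^T or x_i^F) or by a literal player (against a clause containing that
  literal). Call variable i penalised if x_i or d_i takes part in a game of value -5; each such
  game penalises at most two variables. An unpenalised x_i must lose to d_i, which can beat only
  x_i and the weaker tilde-d_i, so x_i wins at most one round: it gains at most 1, and if it does,
  one of x_i^T, x_i^F wins no game at all. Assigning each variable the literal that won more
  clause games, the value-1 games are at most n plus the number of satisfied clauses plus four
  per game of value -5, and each such game costs 5.\<close>

text \<open>Players are ordered so that the stronger one is smaller; the winner of a set of players
  is then its minimum.\<close>

instantiation player :: linorder
begin

definition less_eq_player :: "player \<Rightarrow> player \<Rightarrow> bool" where
  "less_eq_player a b \<longleftrightarrow> skey a \<le> skey b"

definition less_player :: "player \<Rightarrow> player \<Rightarrow> bool" where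
  "less_player a b \<longleftrightarrow> skey a < skey b"

instance
proof
  have skey_inj: "skey a = skey b \<Longrightarrow> a = b" for a b
    by (cases a; cases b; simp)
  fix x y z :: player
  show "x < y \<longleftrightarrow> x \<le> y \<and> \<not> y \<le> x" by (auto simp: less_eq_player_def less_player_def)
  show "x \<le> x" by (simp add: less_eq_player_def)
  show "x \<le> y \<Longrightarrow> y \<le> z \<Longrightarrow> x \<le> z" by (auto simp: less_eq_player_def)
  show "x \<le> y \<Longrightarrow> y \<le> x \<Longrightarrow> x = y" by (auto simp: less_eq_player_def intro: skey_inj)
  show "x \<le> y \<or> y \<le> x" by (auto simp: less_eq_player_def)
qed

end

lemma stronger_eq_min: "stronger a b = min a b"
  by (simp add: stronger_def min_def less_eq_player_def)

lemma halves_less: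
  assumes "r < N" "j < 2 ^ (N - Suc r)"
  shows "2 * j < (2::nat) ^ (N - r)" "2 * j + 1 < (2::nat) ^ (N - r)"
proof -
  have "(2::nat) ^ (N - r) = 2 * 2 ^ (N - Suc r)"
    using assms(1) by (metis Suc_diff_Suc power_Suc)
  then show "2 * j < (2::nat) ^ (N - r)" "2 * j + 1 < (2::nat) ^ (N - r)" using assms(2) by auto
qed

locale knockout =
  fixes P :: "player set" and \<sigma> :: "player \<Rightarrow> nat" and N :: nat
  assumes seeding: "seeding P N \<sigma>"
begin

lemma finite_players: "finite P"
  using seeding bij_betw_finite by (auto simp: seeding_def)

lemma seed_bounds: "p \<in> P \<Longrightarrow> 1 \<le> \<sigma> p \<and> \<sigma> p \<le> 2 ^ N"
  using seeding bij_betwE by (fastforce simp: seeding_def)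

lemma seed_eq_iff: "p \<in> P \<Longrightarrow> q \<in> P \<Longrightarrow> \<sigma> p = \<sigma> q \<longleftrightarrow> p = q"
  using seeding by (auto simp: seeding_def bij_betw_def dest: inj_onD)

text \<open>Blocks of a round are numbered from 0 here, whereas \<^const>\<open>winner\<close> numbers them from 1.\<close>

definition block :: "nat \<Rightarrow> player \<Rightarrow> nat" where
  "block r p = (\<sigma> p - 1) div 2 ^ r"

definition block_players :: "nat \<Rightarrow> nat \<Rightarrow> player set" where
  "block_players r j = {p \<in> P. block r p = j}"

definition champion :: "nat \<Rightarrow> nat \<Rightarrow> player" where
  "champion r j = Min (block_players r j)"

lemma block_Suc: "block (Suc r) p = block r p div 2"
  by (simp only: block_def power_Suc2 div_mult2_eq)

lemma block_mono: assumes "r' \<le> r" shows "block r p = block r' p div 2 ^ (r - r')"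
proof -
  have "(2::nat) ^ r = 2 ^ r' * 2 ^ (r - r')" using assms by (simp flip: power_add)
  then show ?thesis by (simp add: block_def div_mult2_eq)
qed

lemma block_less: assumes "p \<in> P" "r \<le> N" shows "block r p < 2 ^ (N - r)"
proof -
  have "\<sigma> p - 1 < 2 ^ N" using seed_bounds[OF assms(1)] by linarith
  then have "\<sigma> p - 1 < 2 ^ (N - r) * 2 ^ r" using assms(2) by (simp flip: power_add)
  then show ?thesis unfolding block_def by (rule less_mult_imp_div_less)
qed

lemma block_final: assumes "p \<in> P" shows "block N p = 0"
proof -
  have "\<sigma> p - 1 < 2 ^ N" using seed_bounds[OF assms] by linarith
  then show ?thesis by (simp add: block_def)
qed

lemma block_players_Suc:
  "block_players (Suc r) j = block_players r (2 * j) \<union> block_players r (2 * j + 1)"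
  by (auto simp: block_players_def block_Suc)

lemma block_players_nonempty:
  assumes "r \<le> N" "j < 2 ^ (N - r)" shows "block_players r j \<noteq> {}"
proof -
  define x where "x = j * 2 ^ r + 1"
  have "(j + 1) * 2 ^ r \<le> 2 ^ (N - r) * 2 ^ r"
    using assms(2) by (intro mult_right_mono) auto
  also have "\<dots> = 2 ^ N" using assms(1) by (simp flip: power_add)
  finally have "2 ^ r + j * 2 ^ r \<le> (2::nat) ^ N" by (simp add: algebra_simps)
  moreover have "1 \<le> (2::nat) ^ r" by simp
  ultimately have "x \<le> 2 ^ N" unfolding x_def by linarith
  then have "x \<in> {1..2 ^ N}" by (simp add: x_def)
  then obtain p where "p \<in> P" "\<sigma> p = x"
    using seeding by (metis bij_betw_def imageE seeding_def)
  then show ?thesis by (auto simp: block_players_def block_def x_def)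
qed

lemma champion_in_block:
  assumes "r \<le> N" "j < 2 ^ (N - r)"
  shows "champion r j \<in> P" "block r (champion r j) = j"
proof -
  have "champion r j \<in> block_players r j"
    unfolding champion_def using block_players_nonempty[OF assms] finite_players
    by (intro Min_in) (auto simp: block_players_def)
  then show "champion r j \<in> P" "block r (champion r j) = j" by (auto simp: block_players_def)
qed

lemma champion_le: "p \<in> P \<Longrightarrow> champion r (block r p) \<le> p"
  unfolding champion_def using finite_players by (intro Min_le) (auto simp: block_players_def)

lemma champion_Suc:
  assumes "r < N" "j < 2 ^ (N - Suc r)"
  shows "champion (Suc r) j = min (champion r (2 * j)) (champion r (2 * j + 1))"
  unfolding champion_def block_players_Suc using halves_less[OF assms] assms(1) finite_players
  by (intro Min_Un block_players_nonempty) (auto simp: block_players_def)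

lemma winner_eq_champion:
  "r \<le> N \<Longrightarrow> j < 2 ^ (N - r) \<Longrightarrow> winner P \<sigma> r (Suc j) = champion r j"
proof (induction r arbitrary: j)
  case 0
  have "Suc j \<in> {1..2 ^ N}" using 0 by simp
  then have p: "inv_into P \<sigma> (Suc j) \<in> P" "\<sigma> (inv_into P \<sigma> (Suc j)) = Suc j"
    using seeding by (auto simp: seeding_def bij_betw_def inv_into_into f_inv_into_f)
  have "block_players 0 j = {inv_into P \<sigma> (Suc j)}"
  proof (intro set_eqI iffI)
    fix q assume "q \<in> block_players 0 j"
    then have "q \<in> P" "\<sigma> q = Suc j"
      using seed_bounds[of q] by (auto simp: block_players_def block_def)
    then show "q \<in> {inv_into P \<sigma> (Suc j)}" using p seed_eq_iff by (metis singletonI)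
  qed (use p in \<open>auto simp: block_players_def block_def\<close>)
  then show ?case by (simp add: champion_def)
next
  case (Suc r)
  then have "winner P \<sigma> r (Suc (2 * j)) = champion r (2 * j)"
    "winner P \<sigma> r (Suc (2 * j + 1)) = champion r (2 * j + 1)"
    using halves_less[of r N j] by auto
  then show ?case
    using champion_Suc Suc.prems by (simp add: stronger_eq_min)
qed

definition survives :: "nat \<Rightarrow> player \<Rightarrow> bool" where
  "survives r p \<longleftrightarrow> p = champion r (block r p)"

lemma survives_iff:
  assumes "p \<in> P" shows "survives r p \<longleftrightarrow> (\<forall>q\<in>P. block r q = block r p \<longrightarrow> p \<le> q)"
proof
  assume "survives r p"
  then show "\<forall>q\<in>P. block r q = block r p \<longrightarrow> p \<le> q"
    unfolding survives_def by (metis champion_le)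
next
  assume "\<forall>q\<in>P. block r q = block r p \<longrightarrow> p \<le> q"
  then show "survives r p"
    unfolding survives_def champion_def using assms finite_players
    by (intro Min_eqI[symmetric]) (auto simp: block_players_def)
qed

lemma survives_0: assumes "p \<in> P" shows "survives 0 p"
proof -
  have "q = p" if "q \<in> P" "\<sigma> q - 1 = \<sigma> p - 1" for q
    using that seed_bounds[of p] seed_bounds[of q] assms seed_eq_iff by fastforce
  then show ?thesis using assms by (auto simp: survives_iff block_def)
qed

lemma survives_mono: "p \<in> P \<Longrightarrow> r' \<le> r \<Longrightarrow> survives r p \<Longrightarrow> survives r' p"
  by (auto simp: survives_iff block_mono[of r' r])

lemma champion_survives: "r \<le> N \<Longrightarrow> j < 2 ^ (N - r) \<Longrightarrow> survives r (champion r j)"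
  using champion_in_block by (simp add: survives_def)

definition rounds_won :: "player \<Rightarrow> nat" where
  "rounds_won p = Max {r. r \<le> N \<and> survives r p}"

lemma rounds_won_le: "p \<in> P \<Longrightarrow> rounds_won p \<le> N"
  unfolding rounds_won_def using survives_0 by (subst Max_le_iff) auto

lemma survives_iff_le_rounds_won:
  assumes "p \<in> P" "r \<le> N" shows "survives r p \<longleftrightarrow> r \<le> rounds_won p"
proof
  assume "survives r p"
  then show "r \<le> rounds_won p" unfolding rounds_won_def using assms(2) by (intro Max_ge) auto
next
  have "rounds_won p \<in> {r. r \<le> N \<and> survives r p}"
    unfolding rounds_won_def using survives_0[OF assms(1)] by (intro Max_in) auto
  then show "r \<le> rounds_won p \<Longrightarrow> survives r p" using survives_mono[OF assms(1)] by blast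
qed

definition eliminated :: "player set" where
  "eliminated = {q \<in> P. rounds_won q < N}"

lemma eliminated_if_stronger: "p \<in> P \<Longrightarrow> q \<in> P \<Longrightarrow> q < p \<Longrightarrow> p \<in> eliminated"
  using survives_iff_le_rounds_won[of p N] rounds_won_le[of p]
  by (fastforce simp: eliminated_def survives_iff block_final)

definition loser :: "nat \<Rightarrow> nat \<Rightarrow> player" where
  "loser r j = max (champion r (2 * j)) (champion r (2 * j + 1))"

definition eliminator :: "player \<Rightarrow> player" where
  "eliminator q = champion (Suc (rounds_won q)) (block (Suc (rounds_won q)) q)"

lemma loser_props:
  assumes "r < N" "j < 2 ^ (N - Suc r)"
  shows "loser r j \<in> eliminated" "rounds_won (loser r j) = r" "block (Suc r) (loser r j) = j"
    "eliminator (loser r j) = champion (Suc r) j" "champion (Suc r) j < loser r j"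
proof -
  define a b where "a = champion r (2 * j)" and "b = champion r (2 * j + 1)"
  have ab: "a \<in> P" "b \<in> P" "block r a = 2 * j" "block r b = 2 * j + 1"
    "survives r a" "survives r b"
    unfolding a_def b_def using halves_less[OF assms] assms(1) champion_in_block champion_survives
    by simp_all
  have L: "loser r j = max a b" and W: "champion (Suc r) j = min a b"
    using champion_Suc[OF assms] by (simp_all add: loser_def a_def b_def)
  have "a \<noteq> b" using ab by auto
  then show less: "champion (Suc r) j < loser r j"
    unfolding L W by (auto simp: min_def max_def not_le less_le)
  have "loser r j \<in> P" "survives r (loser r j)" "block (Suc r) (loser r j) = j"
    using ab unfolding L by (auto simp: max_def block_Suc)
  moreover from this less have "\<not> survives (Suc r) (loser r j)"
    unfolding survives_def by auto
  ultimately show "rounds_won (loser r j) = r" "block (Suc r) (loser r j) = j"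
    using assms survives_iff_le_rounds_won[of "loser r j"] by (auto simp: not_less_eq_eq)
  then show "loser r j \<in> eliminated" "eliminator (loser r j) = champion (Suc r) j"
    using assms \<open>loser r j \<in> P\<close> by (simp_all add: eliminated_def eliminator_def)
qed

lemma eliminated_game_in_range:
  assumes "q \<in> eliminated"
  shows "rounds_won q < N" "block (Suc (rounds_won q)) q < 2 ^ (N - Suc (rounds_won q))"
  using assms block_less by (auto simp: eliminated_def)

lemma eliminated_eq_loser:
  assumes "q \<in> eliminated"
  shows "q = loser (rounds_won q) (block (Suc (rounds_won q)) q)"
proof -
  define r j where "r = rounds_won q" and "j = block (Suc r) q"
  have "q \<in> P" "r < N" using assms by (auto simp: eliminated_def r_def)
  then have "survives r q" "\<not> survives (Suc r) q"
    using survives_iff_le_rounds_won[of q] by (auto simp: r_def)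
  then have "q = champion r (block r q)" "q \<noteq> champion (Suc r) j"
    by (auto simp: survives_def j_def)
  moreover have "block r q = 2 * j \<or> block r q = 2 * j + 1"
    using block_Suc[of r q] by (auto simp: j_def)
  ultimately show ?thesis
    using champion_Suc eliminated_game_in_range[OF assms]
    by (auto simp: loser_def r_def j_def min_def max_def)
qed

lemma eliminator_in_players: assumes "q \<in> eliminated" shows "eliminator q \<in> P"
  using champion_in_block(1)[of "Suc (rounds_won q)"] eliminated_game_in_range[OF assms]
  by (simp add: eliminator_def Suc_le_eq)

lemma eliminator_less: assumes "q \<in> eliminated" shows "eliminator q < q"
  using loser_props(5)[OF eliminated_game_in_range[OF assms]] eliminated_eq_loser[OF assms]
  by (simp add: eliminator_def)

lemma rounds_won_less_eliminator:
  assumes "q \<in> eliminated" shows "rounds_won q < rounds_won (eliminator q)"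
proof -
  have "survives (Suc (rounds_won q)) (eliminator q)"
    using champion_survives[of "Suc (rounds_won q)"] eliminated_game_in_range[OF assms]
    by (simp add: eliminator_def Suc_le_eq)
  then show ?thesis
    using survives_iff_le_rounds_won[OF eliminator_in_players[OF assms]]
      eliminated_game_in_range[OF assms]
    by (simp add: Suc_le_eq)
qed

definition victims :: "player \<Rightarrow> player set" where
  "victims p = {q \<in> eliminated. eliminator q = p}"

lemma card_victims:
  assumes "p \<in> P" shows "card (victims p) = rounds_won p"
proof -
  have "bij_betw rounds_won (victims p) {..<rounds_won p}"
  proof (intro bij_betw_byWitness[where f' = "\<lambda>r. loser r (block (Suc r) p)"] ballI image_subsetI)
    show "loser (rounds_won q) (block (Suc (rounds_won q)) p) = q" if "q \<in> victims p" for q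
    proof -
      have "q \<in> eliminated" "p = eliminator q" using that by (auto simp: victims_def)
      then have "block (Suc (rounds_won q)) p = block (Suc (rounds_won q)) q"
        using champion_in_block block_less rounds_won_le
        by (auto simp: eliminator_def eliminated_def Suc_le_eq)
      then show ?thesis using eliminated_eq_loser[OF \<open>q \<in> eliminated\<close>] by simp
    qed
    show "rounds_won q \<in> {..<rounds_won p}" if "q \<in> victims p" for q
      using that rounds_won_less_eliminator by (auto simp: victims_def)
    fix r assume "r \<in> {..<rounds_won p}"
    then have r: "r < N" "block (Suc r) p < 2 ^ (N - Suc r)" "survives (Suc r) p"
      using rounds_won_le[OF assms] block_less[OF assms] survives_iff_le_rounds_won[OF assms]
      by auto
    then show "rounds_won (loser r (block (Suc r) p)) = r" using loser_props by blast
    have "eliminator (loser r (block (Suc r) p)) = p"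
      using loser_props(4)[OF r(1,2)] r(3) by (simp add: survives_def)
    then show "loser r (block (Suc r) p) \<in> victims p"
      using loser_props(1)[OF r(1,2)] by (simp add: victims_def)
  qed
  then show ?thesis by (simp add: bij_betw_same_card)
qed

lemma tournament_value_eq_sum_eliminated:
  assumes sym: "\<And>a b. v a b = v b a"
  shows "tournament_value P v N \<sigma> = (\<Sum>q\<in>eliminated. v (eliminator q) q)"
proof -
  define games where "games = (SIGMA r:{1..N}. {1..(2::nat) ^ (N - r)})"
  define game_value where
    "game_value = (\<lambda>(r, k). v (winner P \<sigma> (r - 1) (2 * k - 1)) (winner P \<sigma> (r - 1) (2 * k)))"
  have "tournament_value P v N \<sigma> = sum game_value games"
    unfolding tournament_value_def games_def game_value_def by (subst sum.Sigma) auto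
  also have "\<dots> = (\<Sum>q\<in>eliminated. v (eliminator q) q)"
    \<comment> \<open>every game is identified with its loser\<close>
  proof (rule sum.reindex_bij_witness[symmetric, where i = "\<lambda>(r, k). loser (r - 1) (k - 1)"
        and j = "\<lambda>q. (Suc (rounds_won q), Suc (block (Suc (rounds_won q)) q))"])
    fix q assume q: "q \<in> eliminated"
    define r j where "r = rounds_won q" and "j = block (Suc r) q"
    have rj: "r < N" "j < 2 ^ (N - Suc r)"
      using eliminated_game_in_range[OF q] by (simp_all add: r_def j_def)
    show "(case (Suc (rounds_won q), Suc (block (Suc (rounds_won q)) q)) of
        (r, k) \<Rightarrow> loser (r - 1) (k - 1)) = q"
      using eliminated_eq_loser[OF q] by simp
    show "(Suc (rounds_won q), Suc (block (Suc (rounds_won q)) q)) \<in> games"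
      using rj by (simp add: games_def r_def j_def)
    have "2 * Suc j - 1 = Suc (2 * j)" "2 * Suc j = Suc (2 * j + 1)" by simp_all
    then have "game_value (Suc r, Suc j) = v (champion r (2 * j)) (champion r (2 * j + 1))"
      using rj winner_eq_champion[of r] halves_less[OF rj] by (simp add: game_value_def)
    also have "\<dots> = v (min (champion r (2 * j)) (champion r (2 * j + 1))) (loser r j)"
      unfolding loser_def by (cases "champion r (2 * j) \<le> champion r (2 * j + 1)") (simp_all add: sym)
    also have "\<dots> = v (eliminator q) q"
      using eliminated_eq_loser[OF q] loser_props(4)[OF rj] champion_Suc[OF rj]
      by (simp add: r_def j_def)
    finally show "game_value (Suc (rounds_won q), Suc (block (Suc (rounds_won q)) q)) = v (eliminator q) q"
      by (simp add: r_def j_def)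
  next
    fix x assume "x \<in> games"
    then obtain r' k where x': "x = (r', k)" "r' \<in> {1..N}" "k \<in> {1..2 ^ (N - r')}"
      by (auto simp: games_def)
    define r j where "r = r' - 1" and "j = k - 1"
    then have x: "x = (Suc r, Suc j)" and rj: "r < N" "j < 2 ^ (N - Suc r)"
      using x' by auto
    show "(case x of (r, k) \<Rightarrow> loser (r - 1) (k - 1)) \<in> eliminated"
      using loser_props(1)[OF rj] by (simp add: x)
    show "(Suc (rounds_won (case x of (r, k) \<Rightarrow> loser (r - 1) (k - 1))),
        Suc (block (Suc (rounds_won (case x of (r, k) \<Rightarrow> loser (r - 1) (k - 1))))
          (case x of (r, k) \<Rightarrow> loser (r - 1) (k - 1)))) = x"
      using loser_props(2,3)[OF rj] by (simp add: x)
  qed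
  finally show ?thesis .
qed

end

fun player_index :: "player \<Rightarrow> nat" where
  "player_index (Dhat i) = i" | "player_index (D i) = i" | "player_index (Dtil i) = i"
| "player_index (X i) = i" | "player_index (XT i) = i" | "player_index (XF i) = i"
| "player_index (C j) = j" | "player_index (F j) = j"

definition literal_player :: "literal \<Rightarrow> player" where
  "literal_player l = (if snd l then XT (fst l) else XF (fst l))"

lemma literal_player_simps [simp]:
  "literal_player (i, True) = XT i" "literal_player (i, False) = XF i"
  by (simp_all add: literal_player_def)

lemma literal_var_range:
  assumes "max23sat n cls" "j \<in> {1..length cls}" "(i, b) \<in> clause_lits (cls ! (j - 1))"
  shows "i \<in> {1..n}"
proof -
  have "cls ! (j - 1) \<in> set cls" using assms(2) by (intro nth_mem) auto
  then show ?thesis using assms unfolding max23sat_def by fastforce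
qed

lemma gval_sym: "gval n cls a b = gval n cls b a"
  unfolding gval_def by (auto simp: disj_commute)

lemma gval_cases: "gval n cls a b \<in> {1, 0, -5}"
  unfolding gval_def by auto

lemma gval_X_eq_neg:
  "i \<in> {1..n} \<Longrightarrow> y \<notin> {D i, XT i, XF i} \<Longrightarrow> gval n cls y (X i) = -5"
  unfolding gval_def val_one_def val_zero_def is_dx_def by auto

lemma gval_D_eq_neg:
  "i \<in> {1..n} \<Longrightarrow> q \<notin> {Dhat i, Dtil i, X i} \<Longrightarrow> gval n cls (D i) q = -5"
  unfolding gval_def val_one_def val_zero_def is_dx_def by auto

lemma gval_X_eq_one: "gval n cls (X i) q = 1 \<Longrightarrow> q \<in> {XT i, XF i}"
  unfolding gval_def val_one_def by (auto split: if_splits)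

lemma gval_literal_eq_one:
  assumes "gval n cls (literal_player (i, b)) q = 1" "literal_player (i, b) < q"
  shows "\<exists>j\<in>{1..length cls}. q = C j \<and> (i, b) \<in> clause_lits (cls ! (j - 1))"
  using assms unfolding gval_def val_one_def
  by (cases b) (auto simp: less_player_def split: if_splits)

lemma gval_eq_one_cases:
  assumes "max23sat n cls" "gval n cls a q = 1" "a < q"
  shows "\<exists>i\<in>{1..n}. a \<in> {X i, XT i, XF i}"
proof -
  have "val_one n cls a q \<or> val_one n cls q a" using assms(2) by (auto simp: gval_def split: if_splits)
  then show ?thesis
    using assms(3) literal_var_range[OF assms(1)] unfolding val_one_def
    by (auto simp: less_player_def)
qed

locale tphi_knockout = knockout "players n cls" \<sigma> "nprime n" for n cls \<sigma> +
  assumes max23sat: "max23sat n cls"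
begin

definition loss_value :: "player \<Rightarrow> int" where
  "loss_value q = gval n cls (eliminator q) q"

definition rewarded :: "player set" where
  "rewarded = {q \<in> eliminated. loss_value q = 1}"

definition penalties :: "player set" where
  "penalties = {q \<in> eliminated. loss_value q = -5}"

definition rewarded_by :: "player \<Rightarrow> player set" where
  "rewarded_by p = {q \<in> victims p. loss_value q = 1}"

definition penalised :: "nat \<Rightarrow> bool" where
  "penalised i \<longleftrightarrow> (\<exists>q\<in>penalties. {q, eliminator q} \<inter> {X i, D i} \<noteq> {})"

definition majority :: "nat \<Rightarrow> bool" where
  "majority i \<longleftrightarrow> card (rewarded_by (XF i)) \<le> card (rewarded_by (XT i))"

lemma finite_eliminated: "finite eliminated"
  using finite_players by (simp add: eliminated_def)

lemma finite_rewarded_by: "finite (rewarded_by p)"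
  using finite_eliminated by (simp add: rewarded_by_def victims_def)

lemma sum_loss_value: "(\<Sum>q\<in>eliminated. loss_value q) = int (card rewarded) - 5 * int (card penalties)"
proof -
  have "(\<Sum>q\<in>eliminated. loss_value q)
      = (\<Sum>q\<in>eliminated. (if loss_value q = 1 then 1 else 0) + (if loss_value q = -5 then -5 else 0))"
    using gval_cases by (intro sum.cong) (auto simp: loss_value_def)
  also have "\<dots> = (\<Sum>q\<in>rewarded. 1) + (\<Sum>q\<in>penalties. -5)"
    by (simp only: sum.distrib rewarded_def penalties_def sum.inter_filter[OF finite_eliminated])
  finally show ?thesis by simp
qed

lemma rewarded_subset_UN:
  "rewarded \<subseteq> (\<Union>i\<in>{1..n}. rewarded_by (X i) \<union> rewarded_by (XT i) \<union> rewarded_by (XF i))"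
proof
  fix q assume "q \<in> rewarded"
  then have q: "q \<in> eliminated" "gval n cls (eliminator q) q = 1"
    by (auto simp: rewarded_def loss_value_def)
  then obtain i where "i \<in> {1..n}" "eliminator q \<in> {X i, XT i, XF i}"
    using gval_eq_one_cases[OF max23sat] eliminator_less by blast
  then show "q \<in> (\<Union>i\<in>{1..n}. rewarded_by (X i) \<union> rewarded_by (XT i) \<union> rewarded_by (XF i))"
    using q by (auto simp: rewarded_by_def victims_def loss_value_def)
qed

lemma rewarded_by_X_subset: "rewarded_by (X i) \<subseteq> {XT i, XF i}"
  by (auto simp: rewarded_by_def victims_def loss_value_def dest: gval_X_eq_one)

lemma rewarded_by_literal:
  assumes "q \<in> rewarded_by (literal_player (i, b))"
  shows "\<exists>j\<in>{1..length cls}. q = C j \<and> (i, b) \<in> clause_lits (cls ! (j - 1))"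
proof -
  have "q \<in> eliminated" "eliminator q = literal_player (i, b)"
    "gval n cls (literal_player (i, b)) q = 1"
    using assms by (auto simp: rewarded_by_def victims_def loss_value_def)
  then show ?thesis using eliminator_less gval_literal_eq_one by metis
qed

lemma card_rewarded_by_literals:
  assumes "i \<in> {1..n}"
  shows "card (rewarded_by (XT i)) + card (rewarded_by (XF i)) \<le> 3"
proof -
  define J where "J = {j \<in> {1..length cls}. occurs_in i (cls ! (j - 1))}"
  have "rewarded_by (XT i) \<union> rewarded_by (XF i) \<subseteq> C ` J"
  proof
    fix q assume "q \<in> rewarded_by (XT i) \<union> rewarded_by (XF i)"
    then obtain b where "q \<in> rewarded_by (literal_player (i, b))"
      by (metis Un_iff literal_player_simps)
    then obtain j where "j \<in> {1..length cls}" "q = C j" "(i, b) \<in> clause_lits (cls ! (j - 1))"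
      using rewarded_by_literal by blast
    then show "q \<in> C ` J" by (auto simp: J_def occurs_in_def)
  qed
  then have "card (rewarded_by (XT i) \<union> rewarded_by (XF i)) \<le> card (C ` J)"
    by (rule card_mono[rotated]) (simp add: J_def)
  also have "\<dots> \<le> card J" by (rule card_image_le) (simp add: J_def)
  moreover have "rewarded_by (XT i) \<inter> rewarded_by (XF i) = {}"
    by (auto simp: rewarded_by_def victims_def)
  moreover have "card J \<le> 3" using max23sat assms by (simp add: max23sat_def J_def)
  ultimately show ?thesis by (simp add: card_Un_disjoint finite_rewarded_by)
qed

lemma unpenalised_rounds_won_X:
  assumes i: "i \<in> {1..n}" and unpenalised: "\<not> penalised i"
  shows "rounds_won (X i) \<le> 1"
proof -
  have P: "X i \<in> players n cls" "D i \<in> players n cls" "Dhat i \<in> players n cls"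
    using i by (auto simp: players_def)
  have no_penalty: "loss_value q \<noteq> -5"
    if "q \<in> eliminated" "{q, eliminator q} \<inter> {X i, D i} \<noteq> {}" for q
    using unpenalised that by (auto simp: penalised_def penalties_def)
  have X: "X i \<in> eliminated"
    using eliminated_if_stronger[OF P(1) P(3)] by (simp add: less_player_def)
  have "eliminator (X i) = D i"
  proof (rule ccontr)
    assume "eliminator (X i) \<noteq> D i"
    moreover have "eliminator (X i) \<noteq> XT i" "eliminator (X i) \<noteq> XF i"
      using eliminator_less[OF X] by (auto simp: less_player_def)
    ultimately have "loss_value (X i) = -5" using gval_X_eq_neg[OF i] by (simp add: loss_value_def)
    then show False using no_penalty[OF X] by simp
  qed
  then have "rounds_won (X i) < rounds_won (D i)" using rounds_won_less_eliminator[OF X] by simp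
  moreover have "victims (D i) \<subseteq> {X i, Dtil i}"
  proof
    fix q assume "q \<in> victims (D i)"
    then have q: "q \<in> eliminated" "eliminator q = D i" by (auto simp: victims_def)
    have "gval n cls (D i) q \<noteq> -5" using no_penalty[OF q(1)] q(2) by (simp add: loss_value_def)
    then have "q \<in> {Dhat i, Dtil i, X i}" using gval_D_eq_neg[OF i] by blast
    moreover have "q \<noteq> Dhat i" using eliminator_less[OF q(1)] q(2) by (auto simp: less_player_def)
    ultimately show "q \<in> {X i, Dtil i}" by blast
  qed
  then have "rounds_won (D i) \<le> 2"
    using card_mono[of "{X i, Dtil i}" "victims (D i)"] card_victims[OF P(2)]
    by (simp add: card_insert_if)
  ultimately show ?thesis by linarith
qed

lemma unpenalised_rewards:
  assumes i: "i \<in> {1..n}" and unpenalised: "\<not> penalised i"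
  shows "card (rewarded_by (X i)) + card (rewarded_by (XT i)) + card (rewarded_by (XF i))
    \<le> 1 + max (card (rewarded_by (XT i))) (card (rewarded_by (XF i)))"
proof (cases "rewarded_by (X i) = {}")
  case False
  then obtain q where q: "q \<in> rewarded_by (X i)" by blast
  have X: "X i \<in> players n cls" using i by (auto simp: players_def)
  have "card (rewarded_by (X i)) \<le> card (victims (X i))"
    using finite_eliminated by (intro card_mono) (auto simp: rewarded_by_def victims_def)
  then have one: "card (rewarded_by (X i)) \<le> 1"
    using card_victims[OF X] unpenalised_rounds_won_X[OF assms] by simp
  have q_elim: "q \<in> eliminated" "eliminator q = X i"
    using q by (auto simp: rewarded_by_def victims_def)
  then have "rounds_won q < rounds_won (X i)" using rounds_won_less_eliminator[OF q_elim(1)] by simp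
  then have "card (victims q) = 0"
    using q_elim(1) card_victims unpenalised_rounds_won_X[OF assms] by (simp add: eliminated_def)
  then have "rewarded_by q = {}"
    using finite_eliminated by (auto simp: rewarded_by_def victims_def)
  moreover have "q = XT i \<or> q = XF i" using q rewarded_by_X_subset by blast
  ultimately show ?thesis using one by auto
qed (use card_rewarded_by_literals[OF i] in \<open>simp add: max_def\<close>)

lemma rewards_per_variable:
  assumes "i \<in> {1..n}"
  shows "card (rewarded_by (X i)) + card (rewarded_by (XT i)) + card (rewarded_by (XF i))
    \<le> 1 + max (card (rewarded_by (XT i))) (card (rewarded_by (XF i))) + (if penalised i then 2 else 0)"
proof (cases "penalised i")
  case True
  have "card (rewarded_by (X i)) \<le> card {XT i, XF i}"
    using card_mono[OF _ rewarded_by_X_subset] by simp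
  then have "card (rewarded_by (X i)) \<le> 2" by simp
  then show ?thesis using True card_rewarded_by_literals[OF assms] by (simp add: max_def)
qed (use unpenalised_rewards[OF assms] in simp)

lemma sum_max_rewards_le_num_sat:
  "(\<Sum>i\<in>{1..n}. max (card (rewarded_by (XT i))) (card (rewarded_by (XF i))))
    \<le> num_sat cls majority"
proof -
  define chosen where "chosen i = rewarded_by (literal_player (i, majority i))" for i
  define satisfied where
    "satisfied = {j \<in> {1..length cls}. \<exists>l\<in>clause_lits (cls ! (j - 1)). lit_sat majority l}"
  have "(\<Sum>i\<in>{1..n}. max (card (rewarded_by (XT i))) (card (rewarded_by (XF i))))
      = (\<Sum>i\<in>{1..n}. card (chosen i))"
    by (intro sum.cong) (auto simp: chosen_def majority_def literal_player_def)
  also have "\<dots> = card (\<Union>i\<in>{1..n}. chosen i)"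
    by (intro card_UN_disjoint[symmetric])
      (auto simp: chosen_def finite_eliminated rewarded_by_def victims_def literal_player_def)
  also have "\<dots> \<le> card (C ` satisfied)"
  proof (intro card_mono subsetI)
    fix q assume "q \<in> (\<Union>i\<in>{1..n}. chosen i)"
    then obtain i j where "j \<in> {1..length cls}" "q = C j"
      "(i, majority i) \<in> clause_lits (cls ! (j - 1))"
      unfolding chosen_def using rewarded_by_literal by blast
    then show "q \<in> C ` satisfied" by (force simp: satisfied_def lit_sat_def)
  qed (simp add: satisfied_def)
  also have "\<dots> \<le> card satisfied" by (rule card_image_le) (simp add: satisfied_def)
  finally show ?thesis by (simp add: num_sat_def satisfied_def)
qed

lemma card_penalised_le: "card {i \<in> {1..n}. penalised i} \<le> 2 * card penalties"
proof -
  have fin: "finite penalties" using finite_eliminated by (simp add: penalties_def)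
  have "{i \<in> {1..n}. penalised i} \<subseteq> (\<Union>q\<in>penalties. {player_index q, player_index (eliminator q)})"
  proof
    fix i assume "i \<in> {i \<in> {1..n}. penalised i}"
    then obtain q where "q \<in> penalties" "{q, eliminator q} \<inter> {X i, D i} \<noteq> {}"
      by (auto simp: penalised_def)
    moreover from this(2) have "i \<in> {player_index q, player_index (eliminator q)}"
      by (auto dest!: sym[of "X i"] sym[of "D i"])
    ultimately show "i \<in> (\<Union>q\<in>penalties. {player_index q, player_index (eliminator q)})" by blast
  qed
  then have "card {i \<in> {1..n}. penalised i}
      \<le> card (\<Union>q\<in>penalties. {player_index q, player_index (eliminator q)})"
    using fin by (intro card_mono) auto
  also have "\<dots> \<le> (\<Sum>q\<in>penalties. card {player_index q, player_index (eliminator q)})"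
    by (rule card_UN_le[OF fin])
  also have "\<dots> \<le> (\<Sum>q\<in>penalties. 2)"
    by (intro sum_mono) (simp add: card_insert_if)
  finally show ?thesis by simp
qed

lemma sum_loss_value_le: "(\<Sum>q\<in>eliminated. loss_value q) \<le> int n + int (num_sat cls majority)"
proof -
  define r where "r p = card (rewarded_by p)" for p
  have "card rewarded \<le> card (\<Union>i\<in>{1..n}. rewarded_by (X i) \<union> rewarded_by (XT i) \<union> rewarded_by (XF i))"
    by (intro card_mono rewarded_subset_UN) (simp add: finite_rewarded_by)
  also have "\<dots> \<le> (\<Sum>i\<in>{1..n}. card (rewarded_by (X i) \<union> rewarded_by (XT i) \<union> rewarded_by (XF i)))"
    by (rule card_UN_le) simp
  also have "\<dots> \<le> (\<Sum>i\<in>{1..n}. r (X i) + r (XT i) + r (XF i))"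
    unfolding r_def by (intro sum_mono) (metis card_Un_le add_right_mono order_trans)
  also have "\<dots> \<le> (\<Sum>i\<in>{1..n}. 1 + max (r (XT i)) (r (XF i)) + (if penalised i then 2 else 0))"
    unfolding r_def by (intro sum_mono rewards_per_variable) simp
  also have "\<dots> = n + (\<Sum>i\<in>{1..n}. max (r (XT i)) (r (XF i))) + 2 * card {i \<in> {1..n}. penalised i}"
    by (simp only: sum.distrib) (simp add: sum.inter_filter[symmetric])
  also have "\<dots> \<le> n + num_sat cls majority + 4 * card penalties"
    using sum_max_rewards_le_num_sat card_penalised_le unfolding r_def by linarith
  finally show ?thesis using sum_loss_value by linarith
qed

end

theorem lemma4:
  fixes n :: nat and cls :: "clause list" and k :: int
  assumes "max23sat n cls"
    and "seeding (players n cls) (nprime n) \<sigma>"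
    and "Tphi_value n cls \<sigma> \<ge> k + int n"
  shows "\<exists>a :: nat \<Rightarrow> bool. int (num_sat cls a) \<ge> k"
proof -
  interpret tphi_knockout n cls \<sigma>
    using assms(1,2) by unfold_locales
  have "Tphi_value n cls \<sigma> = (\<Sum>q\<in>eliminated. loss_value q)"
    unfolding Tphi_value_def loss_value_def
    by (rule tournament_value_eq_sum_eliminated) (rule gval_sym)
  then show ?thesis
    using assms(3) sum_loss_value_le by (intro exI[of _ majority]) linarith
qed

end
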